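(* Let $f\in\mathcal{F}$ be a map that is not a real constant map, let $A$ be a finite subset of $E$, let $B$ be a finite subset of $\mathbb{C}$ and let $R>0$. Then for every $\varepsilon>0$ there exists $g\in\mathcal{F}(f,A)$ such that $d_{\mathcal{F}}(f,g)<\varepsilon$ and $g^{-1}(B)\cap D(0,R)\subset E$.
   Context: $\mathcal{F}$ is a Fréchet space of real and even entire maps (i.e. $f(\bar z)=\overline{f(z)}$ and $f(-z)=f(z)$) containing all real and even polynomial maps, whose topology is finer than the topology of local uniform convergence on $\mathbb{C}$; $(\|\cdot\|_j)_{j\ge0}$ is a sequence of seminorms defining its topology and $d_{\mathcal{F}}(f,g)=\sum_{j\ge0}2^{-j}\min\{1,\|f-g\|_j\}$. $E$ is a countable dense subset of $\mathbb{C}$, symmetric with respect to the real and imaginary axes, with $E\cap(\mathbb{R}\cup i\mathbb{R})$ dense in $\mathbb{R}\cup i\mathbb{R}$. For $f\in\mathcal{F}$ and $A\subseteq\mathbb{C}$, $\mathcal{F}(f,A)=\{g\in\mathcal{F}: g|_A=f|_A\text{ and } g'|_A=f'|_A\}$. $D(0,R)$ is the open disk of radius $R$ centered at $0$. *)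

theory Defs
  imports "HOL-Analysis.Analysis"
begin

definition real_even_entire :: "(complex \<Rightarrow> complex) \<Rightarrow> bool" where
  "real_even_entire f \<longleftrightarrow> f holomorphic_on UNIV \<and>
     (\<forall>z. f (cnj z) = cnj (f z)) \<and> (\<forall>z. f (- z) = f z)"

definition dF :: "(nat \<Rightarrow> (complex \<Rightarrow> complex) \<Rightarrow> real) \<Rightarrow>
                   (complex \<Rightarrow> complex) \<Rightarrow> (complex \<Rightarrow> complex) \<Rightarrow> real" where
  "dF nrm f g = (\<Sum>j. (1/2) ^ j * min 1 (nrm j (\<lambda>z. f z - g z)))"

text \<open>Standing assumptions: F is a Frechet space (real vector space of real even entire
  maps with a countable family of seminorms nrm, Hausdorff and complete for dF),
  containing all real even polynomials, whose topology is finer than local uniform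
  convergence on C.\<close>
definition frechet_setting :: "(complex \<Rightarrow> complex) set \<Rightarrow>
                               (nat \<Rightarrow> (complex \<Rightarrow> complex) \<Rightarrow> real) \<Rightarrow> bool" where
  "frechet_setting F nrm \<longleftrightarrow>
     (\<forall>f\<in>F. real_even_entire f) \<and>
     (\<lambda>z. 0) \<in> F \<and>
     (\<forall>f\<in>F. \<forall>g\<in>F. (\<lambda>z. f z + g z) \<in> F) \<and>
     (\<forall>f\<in>F. \<forall>c::real. (\<lambda>z. of_real c * f z) \<in> F) \<and>
     (\<forall>j. \<forall>f\<in>F. nrm j f \<ge> 0) \<and>
     (\<forall>j. \<forall>f\<in>F. \<forall>g\<in>F. nrm j (\<lambda>z. f z + g z) \<le> nrm j f + nrm j g) \<and>
     (\<forall>j. \<forall>f\<in>F. \<forall>c::real. nrm j (\<lambda>z. of_real c * f z) = \<bar>c\<bar> * nrm j f) \<and>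
     (\<forall>f\<in>F. (\<forall>j. nrm j f = 0) \<longrightarrow> f = (\<lambda>z. 0)) \<and>
     (\<forall>s. (\<forall>n. s n \<in> F) \<longrightarrow>
          (\<forall>e>0. \<exists>N. \<forall>m\<ge>N. \<forall>n\<ge>N. dF nrm (s m) (s n) < e) \<longrightarrow>
          (\<exists>g\<in>F. (\<lambda>n. dF nrm (s n) g) \<longlonglongrightarrow> 0)) \<and>
     (\<forall>(n::nat) (a::nat \<Rightarrow> real). (\<lambda>z. \<Sum>k\<le>n. of_real (a k) * z ^ (2 * k)) \<in> F) \<and>
     (\<forall>K. compact K \<longrightarrow> (\<exists>C N. \<forall>f\<in>F. \<forall>z\<in>K. norm (f z) \<le> C * (\<Sum>j\<le>N. nrm j f)))"

definition admissible_E :: "complex set \<Rightarrow> bool" where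
  "admissible_E E \<longleftrightarrow> countable E \<and> closure E = UNIV \<and>
     (\<forall>z\<in>E. cnj z \<in> E \<and> - cnj z \<in> E) \<and>
     {z. Im z = 0 \<or> Re z = 0} \<subseteq> closure (E \<inter> {z. Im z = 0 \<or> Re z = 0})"

definition F_fix :: "(complex \<Rightarrow> complex) set \<Rightarrow> (complex \<Rightarrow> complex) \<Rightarrow> complex set
                      \<Rightarrow> (complex \<Rightarrow> complex) set" where
  "F_fix F f A = {g\<in>F. \<forall>a\<in>A. g a = f a \<and> deriv g a = deriv f a}"

end

(* Since f is not constant, every b in B is missed by f somewhere. Dividing an entire map g close to
   f by its b-points and applying the maximum modulus principle then bounds the number of b-points of g
   in D(0,R) by a constant K, uniformly for g near f. If g^-1(B) meets D(0,R) in a point w outside E,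
   add to g a small real even polynomial that vanishes on the symmetric orbits of the points of
   g^-1(B) in D(0,R) that already lie in E, and to second order on those of A, chosen so that it moves
   a point e of E near w onto the value g(w). The result stays in F(f,A) and has strictly more points
   of g^-1(B) in D(0,R) lying in E, so after at most K steps of size eps/(K+2) all of them lie in E. *)

theory Submission
  imports Defs "HOL-Complex_Analysis.Complex_Analysis" "HOL-Computational_Algebra.Polynomial"
begin

section \<open>Real even polynomials\<close>

definition even_poly :: "real poly \<Rightarrow> complex \<Rightarrow> complex" where
  "even_poly q z = poly (map_poly of_real q) (z\<^sup>2)"

lemma even_poly_eq_sum: "even_poly q = (\<lambda>z. \<Sum>k\<le>degree q. of_real (coeff q k) * z ^ (2 * k))"
proof
  fix z
  have "degree (map_poly (of_real :: real \<Rightarrow> complex) q) = degree q"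
    by (rule degree_map_poly) simp
  then show "even_poly q z = (\<Sum>k\<le>degree q. of_real (coeff q k) * z ^ (2 * k))"
    unfolding even_poly_def poly_altdef by (simp add: coeff_map_poly power_mult)
qed

lemma map_poly_of_real_mult:
  "map_poly (of_real :: real \<Rightarrow> 'a::{real_algebra_1,comm_ring_1}) (p * q) = map_poly of_real p * map_poly of_real q"
  by (rule poly_eqI) (simp add: coeff_mult coeff_map_poly)

lemma even_poly_mult: "even_poly (p * q) z = even_poly p z * even_poly q z"
  by (simp add: even_poly_def map_poly_of_real_mult)

lemma even_poly_prod: "even_poly (\<Prod>s\<in>S. p s) z = (\<Prod>s\<in>S. even_poly (p s) z)"
proof (induction S rule: infinite_finite_induct)
  case (insert s S)
  then show ?case by (simp add: even_poly_mult)
qed (simp_all add: even_poly_def)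

lemma even_poly_linear: "even_poly [:c\<^sub>1, c\<^sub>2:] z = of_real c\<^sub>1 + of_real c\<^sub>2 * z\<^sup>2"
  by (simp add: even_poly_def map_poly_pCons)

definition orbit_poly :: "complex \<Rightarrow> real poly" where
  "orbit_poly s = [:cmod s ^ 4, - 2 * Re (s\<^sup>2), 1:]"

lemma even_poly_orbit_poly: "even_poly (orbit_poly s) z = (z\<^sup>2 - s\<^sup>2) * (z\<^sup>2 - cnj (s\<^sup>2))"
proof -
  have "s\<^sup>2 * cnj (s\<^sup>2) = of_real ((cmod (s\<^sup>2))\<^sup>2)"
    by (rule complex_norm_square[symmetric])
  also have "(cmod (s\<^sup>2))\<^sup>2 = cmod s ^ 4"
    by (simp add: norm_power flip: power_mult)
  finally have prod: "s\<^sup>2 * cnj (s\<^sup>2) = of_real (cmod s ^ 4)" .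
  have sum: "s\<^sup>2 + cnj (s\<^sup>2) = of_real (2 * Re (s\<^sup>2))"
    by (rule complex_add_cnj)
  have "(z\<^sup>2 - s\<^sup>2) * (z\<^sup>2 - cnj (s\<^sup>2)) = (z\<^sup>2)\<^sup>2 - (s\<^sup>2 + cnj (s\<^sup>2)) * z\<^sup>2 + s\<^sup>2 * cnj (s\<^sup>2)"
    by (simp add: algebra_simps power2_eq_square)
  also have "\<dots> = even_poly (orbit_poly s) z"
    unfolding sum prod
    by (simp add: even_poly_def orbit_poly_def map_poly_pCons algebra_simps power2_eq_square)
  finally show ?thesis ..
qed

lemma even_poly_orbit_poly_eq_0_iff:
  "even_poly (orbit_poly s) z = 0 \<longleftrightarrow> z = s \<or> z = - s \<or> z = cnj s \<or> z = - cnj s"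
  by (auto simp: even_poly_orbit_poly power2_eq_iff)

lemma even_poly_prod_orbit_poly_eq_0_iff:
  assumes "finite S"
  shows "even_poly (\<Prod>s\<in>S. orbit_poly s) z = 0 \<longleftrightarrow> (\<exists>s\<in>S. z = s \<or> z = - s \<or> z = cnj s \<or> z = - cnj s)"
  using assms by (simp add: even_poly_prod even_poly_orbit_poly_eq_0_iff)

lemma real_even_entire_Im_eq_0:
  assumes "real_even_entire h" and "Re z = 0 \<or> Im z = 0"
  shows "Im (h z) = 0"
proof -
  have "cnj z = z \<or> cnj z = - z"
    using assms(2) by (auto simp: complex_eq_iff)
  then have "cnj (h z) = h z"
    using assms(1) unfolding real_even_entire_def by metis
  then show ?thesis
    by (simp add: complex_eq_iff)
qed

lemma real_even_entire_not_constant: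
  assumes "real_even_entire h" and "\<not> (\<exists>c::real. h = (\<lambda>z. of_real c))"
  shows "\<exists>\<zeta>. h \<zeta> \<noteq> b"
proof (rule ccontr)
  assume "\<not> (\<exists>\<zeta>. h \<zeta> \<noteq> b)"
  then have h: "h = (\<lambda>z. b)"
    by auto
  then have "Im b = 0"
    using real_even_entire_Im_eq_0[OF assms(1), of 0] by simp
  then have "h = (\<lambda>z. of_real (Re b))"
    using h by (auto simp: complex_eq_iff)
  with assms(2) show False
    by blast
qed

lemma admissible_E_orbit:
  assumes "admissible_E E" and "s \<in> E"
  shows "- s \<in> E" and "cnj s \<in> E" and "- cnj s \<in> E"
proof -
  have sym: "\<And>z. z \<in> E \<Longrightarrow> cnj z \<in> E \<and> - cnj z \<in> E"
    using assms(1) by (simp add: admissible_E_def)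
  show "cnj s \<in> E" "- cnj s \<in> E"
    using sym[OF assms(2)] by auto
  then show "- s \<in> E"
    using sym[of "cnj s"] by simp
qed

lemma even_poly_prod_orbit_poly_nonzero:
  assumes "admissible_E E" and "finite S" and "S \<subseteq> E" and "w \<notin> E"
  shows "even_poly (\<Prod>s\<in>S. orbit_poly s) w \<noteq> 0"
  using assms admissible_E_orbit[OF assms(1)]
  by (auto simp: even_poly_prod_orbit_poly_eq_0_iff)

section \<open>The metric series\<close>

definition capped_series :: "(nat \<Rightarrow> real) \<Rightarrow> real" where
  "capped_series a = (\<Sum>j. (1/2) ^ j * min 1 (a j))"

lemma dF_eq_capped_series: "dF nrm f g = capped_series (\<lambda>j. nrm j (\<lambda>z. f z - g z))"
  by (simp add: dF_def capped_series_def)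

lemma summable_capped_series:
  assumes "\<And>j. 0 \<le> a j"
  shows "summable (\<lambda>j. (1/2::real) ^ j * min 1 (a j))"
proof (rule summable_comparison_test)
  show "\<exists>N. \<forall>n\<ge>N. norm ((1/2::real) ^ n * min 1 (a n)) \<le> (1/2) ^ n"
    using assms by (auto simp: abs_mult intro!: mult_left_le)
qed (simp add: summable_geometric)

lemma capped_series_term_le:
  assumes "\<And>j. 0 \<le> a j"
  shows "(1/2) ^ j * min 1 (a j) \<le> capped_series a"
  unfolding capped_series_def
  using sum_le_suminf[OF summable_capped_series[OF assms], of "{j}"] assms by auto

lemma capped_series_triangle:
  assumes "\<And>j. 0 \<le> b j" and "\<And>j. 0 \<le> c j" and "\<And>j. 0 \<le> a j" and "\<And>j. a j \<le> b j + c j"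
  shows "capped_series a \<le> capped_series b + capped_series c"
proof -
  have "capped_series a \<le> (\<Sum>j. (1/2) ^ j * min 1 (b j) + (1/2) ^ j * min 1 (c j))"
    unfolding capped_series_def
  proof (rule suminf_le)
    fix j
    have "min 1 (a j) \<le> min 1 (b j) + min 1 (c j)"
      using assms[of j] by linarith
    then show "(1/2::real) ^ j * min 1 (a j) \<le> (1/2) ^ j * min 1 (b j) + (1/2) ^ j * min 1 (c j)"
      by (simp flip: distrib_left)
  qed (use summable_capped_series assms in \<open>auto intro!: summable_add\<close>)
  also have "\<dots> = capped_series b + capped_series c"
    unfolding capped_series_def
    by (rule suminf_add[symmetric]) (use summable_capped_series assms in auto)
  finally show ?thesis .
qed

lemma capped_series_le_head:
  assumes "\<And>j. 0 \<le> a j"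
  shows "capped_series a \<le> (\<Sum>j<J. a j) + 2 * (1/2) ^ J"
proof -
  let ?t = "\<lambda>j. (1/2::real) ^ j * min 1 (a j)"
  have sm: "summable ?t"
    using summable_capped_series[OF assms] .
  have "(\<Sum>n. ?t (n + J)) \<le> (\<Sum>n. (1/2) ^ J * (1/2) ^ n)"
  proof (rule suminf_le)
    show "summable (\<lambda>n. ?t (n + J))"
      using summable_ignore_initial_segment[OF sm, of J] by simp
  qed (use assms in \<open>auto simp: power_add summable_geometric intro!: mult_left_le\<close>)
  also have "\<dots> = 2 * (1/2) ^ J"
    by (simp add: suminf_mult suminf_geometric)
  finally have tail: "(\<Sum>n. ?t (n + J)) \<le> 2 * (1/2) ^ J" .
  have head: "(\<Sum>j<J. ?t j) \<le> (\<Sum>j<J. a j)"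
  proof (rule sum_mono)
    fix j
    have "?t j \<le> 1 * min 1 (a j)"
      using assms by (intro mult_right_mono) (auto simp: power_le_one)
    then show "?t j \<le> a j"
      by linarith
  qed
  show ?thesis
    unfolding capped_series_def suminf_split_initial_segment[OF sm, of J]
    using head tail by linarith
qed

lemma capped_series_small:
  assumes "\<And>j. 0 \<le> X j" and "\<eta> > 0"
  shows "\<exists>\<tau>>0. \<forall>a. (\<forall>j. 0 \<le> a j \<and> a j \<le> \<tau> * X j) \<longrightarrow> capped_series a < \<eta>"
proof -
  obtain J where J: "(1/2::real) ^ J < \<eta> / 4"
    using real_arch_pow_inv[of "\<eta> / 4" "1/2"] assms(2) by auto
  define S where "S = (\<Sum>j<J. X j)"
  have "S \<ge> 0"
    unfolding S_def using assms(1) by (simp add: sum_nonneg)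
  define \<tau> where "\<tau> = \<eta> / (2 * (S + 1))"
  have "\<tau> > 0" and "\<tau> * S < \<eta> / 2"
    using \<open>S \<ge> 0\<close> assms(2) by (auto simp: \<tau>_def field_simps)
  show ?thesis
  proof (intro exI[of _ \<tau>] conjI \<open>\<tau> > 0\<close> allI impI)
    fix a :: "nat \<Rightarrow> real"
    assume a: "\<forall>j. 0 \<le> a j \<and> a j \<le> \<tau> * X j"
    have "(\<Sum>j<J. a j) \<le> (\<Sum>j<J. \<tau> * X j)"
      using a by (intro sum_mono) auto
    also have "\<dots> = \<tau> * S"
      by (simp add: S_def sum_distrib_left)
    finally show "capped_series a < \<eta>"
      using capped_series_le_head[of a J] a J \<open>\<tau> * S < \<eta> / 2\<close> by fastforce
  qed
qed

lemma capped_series_less_imp_less: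
  assumes "\<And>j. 0 \<le> a j" and "capped_series a < (1/2) ^ j * \<epsilon>" and "\<epsilon> \<le> 1"
  shows "a j < \<epsilon>"
proof -
  have "(1/2) ^ j * min 1 (a j) < (1/2) ^ j * \<epsilon>"
    using capped_series_term_le[OF assms(1)] assms(2) by (rule le_less_trans)
  then have "min 1 (a j) < \<epsilon>"
    by simp
  then show ?thesis
    using assms(3) by linarith
qed

section \<open>Counting preimages near a nonconstant entire map\<close>

lemma entire_factor_zeros:
  assumes "G holomorphic_on UNIV" and "finite T" and "\<And>t. t \<in> T \<Longrightarrow> G t = 0"
  obtains k where "k holomorphic_on UNIV" and "\<And>z. G z = (\<Prod>t\<in>T. z - t) * k z"
proof -
  have "\<exists>k. k holomorphic_on UNIV \<and> (\<forall>z. G z = (\<Prod>t\<in>T. z - t) * k z)"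
    using assms(2,3)
  proof (induction T rule: finite_induct)
    case empty
    then show ?case
      using assms(1) by auto
  next
    case (insert t T)
    then obtain k where k: "k holomorphic_on UNIV" "\<forall>z. G z = (\<Prod>t\<in>T. z - t) * k z"
      by auto
    have "(\<Prod>s\<in>T. t - s) \<noteq> 0" and "G t = 0"
      using insert by auto
    then have "k t = 0"
      using k(2) by auto
    define k' where "k' = (\<lambda>z. if z = t then deriv k t else (k z - k t) / (z - t))"
    have "k' holomorphic_on UNIV"
      unfolding k'_def by (rule pole_lemma_open[OF k(1)]) simp
    moreover have "k z = (z - t) * k' z" for z
      using \<open>k t = 0\<close> by (auto simp: k'_def)
    then have "G z = (\<Prod>s\<in>insert t T. z - s) * k' z" for z
      using k(2) insert(1,2) by (simp add: mult_ac)
    ultimately show ?case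
      by blast
  qed
  then show ?thesis
    using that by blast
qed

lemma entire_norm_le_zeros:
  fixes G :: "complex \<Rightarrow> complex"
  assumes "G holomorphic_on UNIV" and "finite T" and "\<And>t. t \<in> T \<Longrightarrow> G t = 0"
    and "T \<subseteq> cball 0 \<rho>" and "norm \<zeta> \<le> \<rho>" and "\<rho> < r"
    and "\<And>z. norm z = r \<Longrightarrow> norm (G z) \<le> M"
  shows "norm (G \<zeta>) \<le> M * (2 * \<rho> / (r - \<rho>)) ^ card T"
proof -
  obtain k where k: "k holomorphic_on UNIV" "\<And>z. G z = (\<Prod>t\<in>T. z - t) * k z"
    using entire_factor_zeros[OF assms(1-3)] by blast
  have T: "norm t \<le> \<rho>" if "t \<in> T" for t
    using assms(4) that by auto
  have k_circle: "norm (k z) \<le> M / (r - \<rho>) ^ card T" if "norm z = r" for z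
  proof -
    have "(\<Prod>t\<in>T. r - \<rho>) \<le> (\<Prod>t\<in>T. norm (z - t))"
    proof (rule prod_mono)
      fix t
      assume "t \<in> T"
      then show "0 \<le> r - \<rho> \<and> r - \<rho> \<le> norm (z - t)"
        using T[of t] that assms(6) norm_triangle_ineq2[of z t] by linarith
    qed
    then have "(r - \<rho>) ^ card T \<le> norm (\<Prod>t\<in>T. z - t)"
      by (simp add: prod_norm)
    moreover have "norm (\<Prod>t\<in>T. z - t) * norm (k z) \<le> M"
      using assms(7)[OF that] k(2) by (simp add: norm_mult)
    ultimately have "(r - \<rho>) ^ card T * norm (k z) \<le> M"
      by (meson mult_right_mono norm_ge_zero order_trans)
    then show ?thesis
      using assms(6) by (simp add: field_simps)
  qed
  have k_\<zeta>: "norm (k \<zeta>) \<le> M / (r - \<rho>) ^ card T"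
  proof (rule maximum_modulus_frontier[of k "cball 0 r"])
    show "k holomorphic_on interior (cball 0 r)" "continuous_on (closure (cball 0 r)) k"
      using k(1) holomorphic_on_subset holomorphic_on_imp_continuous_on by blast+
  qed (use k_circle assms(5,6) in \<open>auto simp: frontier_cball\<close>)
  have "(\<Prod>t\<in>T. norm (\<zeta> - t)) \<le> (\<Prod>t\<in>T. 2 * \<rho>)"
  proof (rule prod_mono)
    fix t
    assume "t \<in> T"
    then show "0 \<le> norm (\<zeta> - t) \<and> norm (\<zeta> - t) \<le> 2 * \<rho>"
      using T[of t] assms(5) norm_triangle_ineq4[of \<zeta> t] by simp
  qed
  then have "norm (\<Prod>t\<in>T. \<zeta> - t) \<le> (2 * \<rho>) ^ card T"
    by (simp add: prod_norm)
  then have "norm (\<Prod>t\<in>T. \<zeta> - t) * norm (k \<zeta>) \<le> (2 * \<rho>) ^ card T * (M / (r - \<rho>) ^ card T)"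
    using k_\<zeta> order_trans[OF norm_ge_zero assms(5)] by (intro mult_mono) auto
  then have "norm (G \<zeta>) \<le> (2 * \<rho>) ^ card T * (M / (r - \<rho>) ^ card T)"
    using k(2)[of \<zeta>] by (simp add: norm_mult)
  then show ?thesis
    by (simp add: power_divide mult_ac)
qed

lemma card_level_set_le_near:
  fixes f :: "complex \<Rightarrow> complex"
  assumes "f holomorphic_on UNIV" and "f \<zeta> \<noteq> b"
  shows "\<exists>K r \<delta>. \<delta> > 0 \<and> (\<forall>g. g holomorphic_on UNIV \<longrightarrow> (\<forall>z\<in>cball 0 r. norm (g z - f z) \<le> \<delta>) \<longrightarrow>
           finite (g -` {b} \<inter> ball 0 R) \<and> card (g -` {b} \<inter> ball 0 R) \<le> K)"
proof -
  \<comment> \<open>With r = 3\<rho> + 1 the ratio q from \<open>entire_norm_le_zeros\<close> is below 1, so more than K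
      b-points of g in D(0,R) would push norm (g \<zeta> - b) below m / 2.\<close>
  define \<rho> where "\<rho> = \<bar>R\<bar> + norm \<zeta>"
  define r where "r = 3 * \<rho> + 1"
  define q where "q = 2 * \<rho> / (r - \<rho>)"
  have "0 \<le> \<rho>" "norm \<zeta> \<le> \<rho>" "R \<le> \<rho>"
    unfolding \<rho>_def using norm_ge_zero[of \<zeta>] abs_ge_self[of R] abs_ge_zero[of R] by linarith+
  then have \<rho>: "norm \<zeta> \<le> \<rho>" "ball 0 R \<subseteq> cball 0 \<rho>" "\<rho> < r"
    by (auto simp: r_def)
  have q: "0 \<le> q" "q < 1"
    using \<open>0 \<le> \<rho>\<close> by (auto simp: q_def r_def field_simps)
  define m where "m = norm (f \<zeta> - b)"
  have "m > 0"
    using assms(2) by (simp add: m_def)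
  have "compact ((\<lambda>z. f z - b) ` cball 0 r)"
    using assms(1) holomorphic_on_imp_continuous_on
    by (intro compact_continuous_image continuous_intros) (auto intro: continuous_on_subset)
  then obtain M where M: "M \<ge> 0" "\<And>z. z \<in> cball 0 r \<Longrightarrow> norm (f z - b) \<le> M"
    by (metis compact_imp_bounded bounded_pos_less imageI less_eq_real_def)
  obtain K where "q ^ K < (m / 2) / (M + m / 2)"
    using real_arch_pow_inv[OF _ q(2)] \<open>m > 0\<close> M(1) by (metis add_nonneg_pos half_gt_zero divide_pos_pos)
  then have K: "(M + m / 2) * q ^ K < m / 2"
    using \<open>m > 0\<close> M(1) by (simp add: field_simps)
  have "finite (g -` {b} \<inter> ball 0 R) \<and> card (g -` {b} \<inter> ball 0 R) \<le> K"
    if g: "g holomorphic_on UNIV" and close: "\<forall>z\<in>cball 0 r. norm (g z - f z) \<le> m / 2" for g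
  proof (rule finite_if_finite_subsets_card_bdd, rule ccontr)
    fix T
    assume T: "T \<subseteq> g -` {b} \<inter> ball 0 R" "finite T" and "\<not> card T \<le> K"
    have "norm (g z - b) \<le> M + m / 2" if "norm z = r" for z
      using M(2)[of z] close[rule_format, of z] norm_triangle_ineq[of "f z - b" "g z - f z"] that
      by auto
    then have "norm (g \<zeta> - b) \<le> (M + m / 2) * q ^ card T"
      unfolding q_def
      by (intro entire_norm_le_zeros[OF _ T(2) _ _ \<rho>(1,3)])
        (use g T \<rho>(2) in \<open>auto intro!: holomorphic_intros\<close>)
    also have "\<dots> \<le> (M + m / 2) * q ^ K"
      using \<open>\<not> card T \<le> K\<close> q M(1) \<open>m > 0\<close> by (intro mult_left_mono power_decreasing) auto
    finally have "norm (g \<zeta> - b) < m / 2"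
      using K by linarith
    moreover have "m \<le> norm (g \<zeta> - b) + norm (g \<zeta> - f \<zeta>)"
      using norm_triangle_ineq4[of "g \<zeta> - b" "g \<zeta> - f \<zeta>"] by (simp add: m_def)
    moreover have "norm (g \<zeta> - f \<zeta>) \<le> m / 2"
      using close \<rho>(1,3) by auto
    ultimately show False
      by linarith
  qed
  then show ?thesis
    using \<open>m > 0\<close> by (intro exI[of _ K] exI[of _ r] exI[of _ "m / 2"]) auto
qed

lemma card_preimage_le_near:
  fixes f :: "complex \<Rightarrow> complex"
  assumes "f holomorphic_on UNIV" and "finite B" and "\<And>b. b \<in> B \<Longrightarrow> \<exists>\<zeta>. f \<zeta> \<noteq> b"
  shows "\<exists>K r \<delta>. \<delta> > 0 \<and> (\<forall>g. g holomorphic_on UNIV \<longrightarrow> (\<forall>z\<in>cball 0 r. norm (g z - f z) \<le> \<delta>) \<longrightarrow>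
           finite (g -` B \<inter> ball 0 R) \<and> card (g -` B \<inter> ball 0 R) \<le> K)"
  using assms(2,3)
proof (induction B rule: finite_induct)
  case empty
  show ?case
    by (intro exI[of _ 0] exI[of _ 0] exI[of _ 1]) auto
next
  case (insert b B)
  obtain K\<^sub>1 r\<^sub>1 \<delta>\<^sub>1 where \<delta>\<^sub>1: "\<delta>\<^sub>1 > 0" and near\<^sub>1: "\<And>g. g holomorphic_on UNIV \<Longrightarrow>
      \<forall>z\<in>cball 0 r\<^sub>1. norm (g z - f z) \<le> \<delta>\<^sub>1 \<Longrightarrow> finite (g -` {b} \<inter> ball 0 R) \<and> card (g -` {b} \<inter> ball 0 R) \<le> K\<^sub>1"
    using card_level_set_le_near[OF assms(1)] insert.prems by (metis insertI1)
  obtain K\<^sub>2 r\<^sub>2 \<delta>\<^sub>2 where \<delta>\<^sub>2: "\<delta>\<^sub>2 > 0" and near\<^sub>2: "\<And>g. g holomorphic_on UNIV \<Longrightarrow>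
      \<forall>z\<in>cball 0 r\<^sub>2. norm (g z - f z) \<le> \<delta>\<^sub>2 \<Longrightarrow> finite (g -` B \<inter> ball 0 R) \<and> card (g -` B \<inter> ball 0 R) \<le> K\<^sub>2"
    using insert by blast
  have "finite (g -` insert b B \<inter> ball 0 R) \<and> card (g -` insert b B \<inter> ball 0 R) \<le> K\<^sub>1 + K\<^sub>2"
    if "g holomorphic_on UNIV" and "\<forall>z\<in>cball 0 (max r\<^sub>1 r\<^sub>2). norm (g z - f z) \<le> min \<delta>\<^sub>1 \<delta>\<^sub>2" for g
  proof -
    have split: "g -` insert b B \<inter> ball 0 R = (g -` {b} \<inter> ball 0 R) \<union> (g -` B \<inter> ball 0 R)"
      by auto
    have "finite (g -` {b} \<inter> ball 0 R) \<and> card (g -` {b} \<inter> ball 0 R) \<le> K\<^sub>1"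
      using that by (intro near\<^sub>1) auto
    moreover have "finite (g -` B \<inter> ball 0 R) \<and> card (g -` B \<inter> ball 0 R) \<le> K\<^sub>2"
      using that by (intro near\<^sub>2) auto
    ultimately show ?thesis
      unfolding split using card_Un_le[of "g -` {b} \<inter> ball 0 R" "g -` B \<inter> ball 0 R"] by auto
  qed
  then show ?case
    using \<delta>\<^sub>1 \<delta>\<^sub>2 by (intro exI[of _ "K\<^sub>1 + K\<^sub>2"] exI[of _ "max r\<^sub>1 r\<^sub>2"] exI[of _ "min \<delta>\<^sub>1 \<delta>\<^sub>2"]) auto
qed

section \<open>Moving a point of E onto a prescribed value\<close>

lemma closure_eventually_nhds_ex:
  assumes "x \<in> closure S" and "eventually P (nhds x)"
  shows "\<exists>y\<in>S. P y"
proof -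
  obtain U where "open U" "x \<in> U" "\<And>y. y \<in> U \<Longrightarrow> P y"
    using assms(2) unfolding eventually_nhds by blast
  then show ?thesis
    using assms(1) unfolding closure_iff_nhds_not_empty by blast
qed

lemma isCont_tendsto_nhds: "isCont f x \<Longrightarrow> (f \<longlongrightarrow> f x) (nhds x)"
  unfolding isCont_def by (rule tendsto_at_iff_tendsto_nhds[THEN iffD1])

lemma isCont_eventually_norm_less:
  assumes "isCont c w" and "c w = 0" and "\<tau> > 0"
  shows "\<forall>\<^sub>F e in nhds w. norm (c e) < \<tau>"
  using isCont_tendsto_nhds[OF assms(1)] assms(2,3) by (auto simp: tendsto_iff)

lemma eventually_small_real_coeffs_on_axes:
  assumes "isCont q w" and "q w = 0" and "\<tau> > 0" and "\<And>e. Re e = 0 \<or> Im e = 0 \<Longrightarrow> q e \<in> \<real>"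
  shows "\<forall>\<^sub>F e in nhds w. (Re e = 0 \<or> Im e = 0) \<longrightarrow>
           (\<exists>c\<^sub>1 c\<^sub>2. \<bar>c\<^sub>1\<bar> < \<tau> \<and> \<bar>c\<^sub>2\<bar> < \<tau> \<and> of_real c\<^sub>1 + of_real c\<^sub>2 * e\<^sup>2 = q e)"
  using isCont_eventually_norm_less[OF assms(1-3)]
proof eventually_elim
  case (elim e)
  show ?case
  proof
    assume "Re e = 0 \<or> Im e = 0"
    then have "of_real (Re (q e)) + of_real 0 * e\<^sup>2 = q e"
      using assms(4) by (simp add: complex_is_Real_iff complex_eq_iff)
    moreover have "\<bar>Re (q e)\<bar> < \<tau>"
      using abs_Re_le_cmod[of "q e"] elim by linarith
    ultimately show "\<exists>c\<^sub>1 c\<^sub>2. \<bar>c\<^sub>1\<bar> < \<tau> \<and> \<bar>c\<^sub>2\<bar> < \<tau> \<and> of_real c\<^sub>1 + of_real c\<^sub>2 * e\<^sup>2 = q e"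
      using assms(3) by (intro exI[of _ "Re (q e)"] exI[of _ 0]) simp
  qed
qed

lemma eventually_small_real_coeffs_off_axes:
  assumes "isCont q w" and "q w = 0" and "\<tau> > 0" and "Im (w\<^sup>2) \<noteq> 0"
  shows "\<forall>\<^sub>F e in nhds w. \<exists>c\<^sub>1 c\<^sub>2. \<bar>c\<^sub>1\<bar> < \<tau> \<and> \<bar>c\<^sub>2\<bar> < \<tau> \<and> of_real c\<^sub>1 + of_real c\<^sub>2 * e\<^sup>2 = q e"
proof -
  define c\<^sub>2 where "c\<^sub>2 e = Im (q e) / Im (e\<^sup>2)" for e
  define c\<^sub>1 where "c\<^sub>1 e = Re (q e) - c\<^sub>2 e * Re (e\<^sup>2)" for e
  have c\<^sub>2: "isCont c\<^sub>2 w" "c\<^sub>2 w = 0"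
    unfolding c\<^sub>2_def using assms(1,2,4) by (auto intro!: continuous_intros)
  have c\<^sub>1: "isCont c\<^sub>1 w" "c\<^sub>1 w = 0"
    unfolding c\<^sub>1_def using assms(1,2) c\<^sub>2 by (auto intro!: continuous_intros)
  have "((\<lambda>e. Im (e\<^sup>2)) \<longlongrightarrow> Im (w\<^sup>2)) (nhds w)"
    by (intro isCont_tendsto_nhds continuous_Im continuous_intros)
  then have "\<forall>\<^sub>F e in nhds w. Im (e\<^sup>2) \<noteq> 0"
    using assms(4) by (rule tendsto_imp_eventually_ne)
  then show ?thesis
    using isCont_eventually_norm_less[OF c\<^sub>1 assms(3)] isCont_eventually_norm_less[OF c\<^sub>2 assms(3)]
  proof eventually_elim
    case (elim e)
    then have "of_real (c\<^sub>1 e) + of_real (c\<^sub>2 e) * e\<^sup>2 = q e"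
      by (simp add: complex_eq_iff c\<^sub>1_def c\<^sub>2_def field_simps)
    then show ?case
      using elim by fastforce
  qed
qed

lemma exists_admissible_point_real_coeffs:
  assumes E: "admissible_E E" and g: "real_even_entire g" and N: "real_even_entire N"
    and "N w \<noteq> 0" and "w \<in> ball 0 R" and "\<tau> > 0"
  shows "\<exists>e\<in>E. e \<in> ball 0 R \<and> N e \<noteq> 0 \<and>
           (\<exists>c\<^sub>1 c\<^sub>2. \<bar>c\<^sub>1\<bar> < \<tau> \<and> \<bar>c\<^sub>2\<bar> < \<tau> \<and> of_real c\<^sub>1 + of_real c\<^sub>2 * e\<^sup>2 = (g w - g e) / N e)"
proof -
  have "isCont g x" "isCont N x" for x
    using g N unfolding real_even_entire_def
    by (auto intro: holomorphic_on_imp_continuous_on continuous_on_interior)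
  define q where "q e = (g w - g e) / N e" for e
  have q: "isCont q w" "q w = 0"
    unfolding q_def using \<open>\<And>x. isCont g x\<close> \<open>\<And>x. isCont N x\<close> \<open>N w \<noteq> 0\<close>
    by (auto intro!: continuous_intros)
  have near: "\<forall>\<^sub>F e in nhds w. e \<in> ball 0 R \<and> N e \<noteq> 0"
    using assms(4,5) isCont_tendsto_nhds[OF \<open>isCont N w\<close>]
    by (intro eventually_conj eventually_nhds_in_open tendsto_imp_eventually_ne) auto
  \<comment> \<open>Near an axis, 1 and e squared are almost linearly dependent over the reals; there e is taken
      on the axes as well, where the quotient q e is real.\<close>
  show ?thesis
  proof (cases "Re w = 0 \<or> Im w = 0")
    case True
    have "q e \<in> \<real>" if "Re e = 0 \<or> Im e = 0" for e
      using real_even_entire_Im_eq_0[OF g True] real_even_entire_Im_eq_0[OF g that]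
        real_even_entire_Im_eq_0[OF N that]
      by (simp add: q_def complex_is_Real_iff)
    moreover have "w \<in> closure (E \<inter> {z. Im z = 0 \<or> Re z = 0})"
      using E True unfolding admissible_E_def by blast
    ultimately show ?thesis
      using closure_eventually_nhds_ex[OF _ eventually_conj[OF near
          eventually_small_real_coeffs_on_axes[OF q \<open>\<tau> > 0\<close>]]]
      unfolding q_def by fastforce
  next
    case False
    then have "Im (w\<^sup>2) \<noteq> 0"
      by (simp add: power2_eq_square)
    moreover have "w \<in> closure E"
      using E by (simp add: admissible_E_def)
    ultimately show ?thesis
      using closure_eventually_nhds_ex[OF _ eventually_conj[OF near
          eventually_small_real_coeffs_off_axes[OF q \<open>\<tau> > 0\<close>]]]
      unfolding q_def by blast
  qed
qed

section \<open>Perturbations inside the Frechet space\<close>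

lemma has_field_derivative_square_mult_zero:
  assumes "u field_differentiable at a" and "v field_differentiable at a" and "u a = 0"
  shows "((\<lambda>z. (u z)\<^sup>2 * v z) has_field_derivative 0) (at a)"
proof -
  have "((\<lambda>z. (u z)\<^sup>2 * v z) has_field_derivative
          (u a)\<^sup>2 * deriv v a + (of_nat 2 * (deriv u a * (u a) ^ (2 - Suc 0))) * v a) (at a)"
    using assms(1,2) by (intro DERIV_mult' DERIV_power) (simp_all add: field_differentiable_derivI)
  then show ?thesis
    using assms(3) by simp
qed

lemma exists_by_bounded_improvement:
  fixes d :: "'a \<Rightarrow> real" and c :: "'a \<Rightarrow> nat"
  assumes "x\<^sub>0 \<in> X" and "d x\<^sub>0 = 0" and "\<eta> > 0"
    and bounded: "\<And>x. x \<in> X \<Longrightarrow> d x < \<eta> \<Longrightarrow> c x \<le> K"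
    and improve: "\<And>x t. x \<in> X \<Longrightarrow> \<not> Q x \<Longrightarrow> t > 0 \<Longrightarrow> d x + t < \<eta> \<Longrightarrow>
                    \<exists>x'\<in>X. d x' < d x + t \<and> c x < c x'"
  shows "\<exists>x\<in>X. d x < \<eta> \<and> Q x"
proof -
  define s where "s = \<eta> / (K + 2)"
  have "s > 0" and \<eta>: "\<eta> = (K + 2) * s"
    using assms(3) by (simp_all add: s_def)
  have "\<exists>x\<in>X. d x < (real n + 1) * s \<and> (Q x \<or> n \<le> c x)" if "n \<le> K + 1" for n
    using that
  proof (induction n)
    case 0
    then show ?case
      using assms(1,2) \<open>s > 0\<close> by (intro bexI[of _ x\<^sub>0]) auto
  next
    case (Suc n)
    then obtain x where x: "x \<in> X" "d x < (real n + 1) * s" "Q x \<or> n \<le> c x"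
      by (metis Suc_leD)
    show ?case
    proof (cases "Q x")
      case True
      then show ?thesis
        using x \<open>s > 0\<close> by (intro bexI[of _ x]) (auto simp: algebra_simps)
    next
      case False
      have "d x + s < (real n + 2) * s"
        using x(2) by (simp add: algebra_simps)
      also have "\<dots> \<le> \<eta>"
        unfolding \<eta> using Suc.prems \<open>s > 0\<close> by (intro mult_right_mono) auto
      finally obtain x' where "x' \<in> X" "d x' < d x + s" "c x < c x'"
        using improve[OF x(1) False \<open>s > 0\<close>] by blast
      then show ?thesis
        using x False by (intro bexI[of _ x']) (auto simp: algebra_simps)
    qed
  qed
  from this[of "K + 1"] obtain x where "x \<in> X" "d x < \<eta>" "Q x \<or> K + 1 \<le> c x"
    by (auto simp: \<eta> algebra_simps)
  then show ?thesis
    using bounded by fastforce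
qed

context
  fixes F :: "(complex \<Rightarrow> complex) set" and nrm :: "nat \<Rightarrow> (complex \<Rightarrow> complex) \<Rightarrow> real"
  assumes F: "frechet_setting F nrm"
begin

lemma F_real_even_entire: "h \<in> F \<Longrightarrow> real_even_entire h"
  using F by (simp add: frechet_setting_def)

lemma F_holomorphic: "h \<in> F \<Longrightarrow> h holomorphic_on UNIV"
  using F_real_even_entire by (simp add: real_even_entire_def)

lemma F_add: "h \<in> F \<Longrightarrow> k \<in> F \<Longrightarrow> (\<lambda>z. h z + k z) \<in> F"
  using F by (simp add: frechet_setting_def)

lemma F_scale: "h \<in> F \<Longrightarrow> (\<lambda>z. of_real c * h z) \<in> F"
  using F by (simp add: frechet_setting_def)

lemma F_diff:
  assumes "h \<in> F" and "k \<in> F"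
  shows "(\<lambda>z. h z - k z) \<in> F"
proof -
  have "(\<lambda>z. h z + of_real (- 1) * k z) \<in> F"
    using assms by (intro F_add F_scale)
  then show ?thesis
    by simp
qed

lemma even_poly_in_F: "even_poly q \<in> F"
  using F unfolding even_poly_eq_sum frechet_setting_def by blast

lemma nrm_nonneg: "h \<in> F \<Longrightarrow> 0 \<le> nrm j h"
  using F by (simp add: frechet_setting_def)

lemma nrm_triangle: "h \<in> F \<Longrightarrow> k \<in> F \<Longrightarrow> nrm j (\<lambda>z. h z + k z) \<le> nrm j h + nrm j k"
  using F by (simp add: frechet_setting_def)

lemma nrm_scale: "h \<in> F \<Longrightarrow> nrm j (\<lambda>z. of_real c * h z) = \<bar>c\<bar> * nrm j h"
  using F by (simp add: frechet_setting_def)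

lemma dF_self: "dF nrm f f = 0"
proof -
  have "(\<lambda>z. 0) \<in> F"
    using F by (simp add: frechet_setting_def)
  then have "nrm j (\<lambda>z. 0) = 0" for j
    using nrm_scale[of "\<lambda>z. 0" j 0] by simp
  then show ?thesis
    by (simp add: dF_def)
qed

lemma dF_triangle:
  assumes "f \<in> F" and "g \<in> F" and "h \<in> F"
  shows "dF nrm f h \<le> dF nrm f g + dF nrm g h"
  unfolding dF_eq_capped_series
proof (rule capped_series_triangle)
  fix j
  show "0 \<le> nrm j (\<lambda>z. f z - g z)" "0 \<le> nrm j (\<lambda>z. g z - h z)" "0 \<le> nrm j (\<lambda>z. f z - h z)"
    using assms by (auto intro!: nrm_nonneg F_diff)
  have "nrm j (\<lambda>z. (f z - g z) + (g z - h z)) \<le> nrm j (\<lambda>z. f z - g z) + nrm j (\<lambda>z. g z - h z)"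
    using assms by (intro nrm_triangle F_diff)
  then show "nrm j (\<lambda>z. f z - h z) \<le> nrm j (\<lambda>z. f z - g z) + nrm j (\<lambda>z. g z - h z)"
    by simp
qed

lemma dF_small_imp_uniformly_close:
  assumes "compact K" and "\<delta> > 0"
  shows "\<exists>\<eta>>0. \<forall>f\<in>F. \<forall>g\<in>F. dF nrm f g < \<eta> \<longrightarrow> (\<forall>z\<in>K. norm (g z - f z) \<le> \<delta>)"
proof -
  obtain C N where CN: "\<And>h z. h \<in> F \<Longrightarrow> z \<in> K \<Longrightarrow> norm (h z) \<le> C * (\<Sum>j\<le>N. nrm j h)"
    using F assms(1) unfolding frechet_setting_def by metis
  define C' where "C' = max C 1 * (real N + 1)"
  have "C' > 0"
    by (simp add: C'_def)
  define \<epsilon> where "\<epsilon> = min 1 (\<delta> / C')"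
  have "\<epsilon> > 0" "\<epsilon> \<le> 1" "C' * \<epsilon> \<le> \<delta>"
    using assms(2) \<open>C' > 0\<close> by (auto simp: \<epsilon>_def min_def field_simps)
  have "norm (g z - f z) \<le> \<delta>"
    if fg: "f \<in> F" "g \<in> F" "dF nrm f g < (1/2) ^ N * \<epsilon>" and "z \<in> K" for f g z
  proof -
    let ?h = "\<lambda>z. f z - g z"
    have "?h \<in> F"
      using fg(1,2) by (rule F_diff)
    have nrm_less: "nrm j ?h < \<epsilon>" if "j \<le> N" for j
    proof (rule capped_series_less_imp_less[where a = "\<lambda>j. nrm j ?h"])
      have "(1/2::real) ^ N * \<epsilon> \<le> (1/2) ^ j * \<epsilon>"
        using that \<open>\<epsilon> > 0\<close> by (intro mult_right_mono power_decreasing) auto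
      then show "capped_series (\<lambda>j. nrm j ?h) < (1/2) ^ j * \<epsilon>"
        using fg(3) unfolding dF_eq_capped_series by linarith
    qed (use \<open>?h \<in> F\<close> nrm_nonneg \<open>\<epsilon> \<le> 1\<close> in auto)
    have "(\<Sum>j\<le>N. nrm j ?h) \<le> (\<Sum>j\<le>N. \<epsilon>)"
      using nrm_less by (intro sum_mono) (simp add: less_imp_le)
    then have "(\<Sum>j\<le>N. nrm j ?h) \<le> (real N + 1) * \<epsilon>"
      by (simp add: add.commute)
    moreover have "0 \<le> (\<Sum>j\<le>N. nrm j ?h)"
      using \<open>?h \<in> F\<close> by (intro sum_nonneg nrm_nonneg)
    ultimately have "C * (\<Sum>j\<le>N. nrm j ?h) \<le> max C 1 * ((real N + 1) * \<epsilon>)"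
      by (intro mult_mono) auto
    then have "C * (\<Sum>j\<le>N. nrm j ?h) \<le> C' * \<epsilon>"
      by (simp add: C'_def mult.assoc)
    then have "norm (?h z) \<le> \<delta>"
      using CN[OF \<open>?h \<in> F\<close> \<open>z \<in> K\<close>] \<open>C' * \<epsilon> \<le> \<delta>\<close> by linarith
    then show ?thesis
      by (simp add: norm_minus_commute)
  qed
  then show ?thesis
    using \<open>\<epsilon> > 0\<close> by (intro exI[of _ "(1/2) ^ N * \<epsilon>"]) auto
qed

lemma dF_small_imp_card_preimage_le:
  assumes "f \<in> F" and "finite B" and "\<And>b. b \<in> B \<Longrightarrow> \<exists>\<zeta>. f \<zeta> \<noteq> b"
  obtains K \<eta> where "\<eta> > 0" and "\<And>g. g \<in> F \<Longrightarrow> dF nrm f g < \<eta> \<Longrightarrow>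
    finite (g -` B \<inter> ball 0 R) \<and> card (g -` B \<inter> ball 0 R) \<le> K"
proof -
  obtain K r \<delta> where "\<delta> > 0" and near: "\<And>g. g holomorphic_on UNIV \<Longrightarrow>
      \<forall>z\<in>cball 0 r. norm (g z - f z) \<le> \<delta> \<Longrightarrow> finite (g -` B \<inter> ball 0 R) \<and> card (g -` B \<inter> ball 0 R) \<le> K"
    using card_preimage_le_near[OF F_holomorphic[OF assms(1)] assms(2,3)] by blast
  obtain \<eta> where "\<eta> > 0" and "\<forall>g\<in>F. dF nrm f g < \<eta> \<longrightarrow> (\<forall>z\<in>cball 0 r. norm (g z - f z) \<le> \<delta>)"
    using dF_small_imp_uniformly_close[OF compact_cball \<open>\<delta> > 0\<close>] assms(1) by blast
  then show ?thesis
    using that near F_holomorphic by blast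
qed

lemma dF_add_even_poly_small:
  assumes "t > 0"
  obtains \<tau> where "\<tau> > 0" and "\<And>c\<^sub>1 c\<^sub>2. \<bar>c\<^sub>1\<bar> < \<tau> \<Longrightarrow> \<bar>c\<^sub>2\<bar> < \<tau> \<Longrightarrow>
    dF nrm g (\<lambda>z. g z + even_poly (N * [:c\<^sub>1, c\<^sub>2:]) z) < t"
proof -
  let ?P\<^sub>1 = "even_poly N" and ?P\<^sub>2 = "even_poly (N * [:0, 1:])"
  define X where "X j = nrm j ?P\<^sub>1 + nrm j ?P\<^sub>2" for j
  have "0 \<le> X j" for j
    unfolding X_def by (simp add: even_poly_in_F nrm_nonneg)
  then obtain \<tau> where "\<tau> > 0" and small: "\<And>a. \<forall>j. 0 \<le> a j \<and> a j \<le> \<tau> * X j \<Longrightarrow> capped_series a < t"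
    using capped_series_small assms by blast
  have "dF nrm g (\<lambda>z. g z + even_poly (N * [:c\<^sub>1, c\<^sub>2:]) z) < t"
    if c: "\<bar>c\<^sub>1\<bar> < \<tau>" "\<bar>c\<^sub>2\<bar> < \<tau>" for c\<^sub>1 c\<^sub>2
  proof -
    let ?h\<^sub>1 = "\<lambda>z. of_real (- c\<^sub>1) * ?P\<^sub>1 z" and ?h\<^sub>2 = "\<lambda>z. of_real (- c\<^sub>2) * ?P\<^sub>2 z"
    have diff: "(\<lambda>z. g z - (g z + even_poly (N * [:c\<^sub>1, c\<^sub>2:]) z)) = (\<lambda>z. ?h\<^sub>1 z + ?h\<^sub>2 z)"
      by (rule ext) (simp only: even_poly_mult even_poly_linear, simp add: algebra_simps)
    have F_h: "?h\<^sub>1 \<in> F" "?h\<^sub>2 \<in> F"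
      by (rule F_scale[OF even_poly_in_F])+
    have "nrm j (\<lambda>z. ?h\<^sub>1 z + ?h\<^sub>2 z) \<le> \<tau> * X j" for j
    proof -
      have "nrm j (\<lambda>z. ?h\<^sub>1 z + ?h\<^sub>2 z) \<le> \<bar>c\<^sub>1\<bar> * nrm j ?P\<^sub>1 + \<bar>c\<^sub>2\<bar> * nrm j ?P\<^sub>2"
        using nrm_triangle[OF F_h, of j] unfolding nrm_scale[OF even_poly_in_F] by simp
      also have "\<dots> \<le> \<tau> * X j"
        using c by (simp add: X_def distrib_left add_mono mult_right_mono even_poly_in_F nrm_nonneg)
      finally show ?thesis .
    qed
    moreover have "0 \<le> nrm j (\<lambda>z. ?h\<^sub>1 z + ?h\<^sub>2 z)" for j
      using F_add[OF F_h] by (rule nrm_nonneg)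
    ultimately show ?thesis
      unfolding dF_eq_capped_series diff by (intro small) blast
  qed
  then show ?thesis
    using that \<open>\<tau> > 0\<close> by blast
qed

lemma add_even_poly_in_F_fix:
  assumes "g \<in> F_fix F f A" and "finite A"
  shows "(\<lambda>z. g z + even_poly ((\<Prod>a\<in>A. orbit_poly a)\<^sup>2 * p) z) \<in> F_fix F f A"
proof -
  let ?P = "even_poly (\<Prod>a\<in>A. orbit_poly a)"
  have g: "g \<in> F" "\<And>a. a \<in> A \<Longrightarrow> g a = f a \<and> deriv g a = deriv f a"
    using assms(1) by (auto simp: F_fix_def)
  have sum: "(\<lambda>z. g z + even_poly ((\<Prod>a\<in>A. orbit_poly a)\<^sup>2 * p) z) = (\<lambda>z. g z + (?P z)\<^sup>2 * even_poly p z)"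
    by (simp add: even_poly_mult power2_eq_square)
  have P_zero: "?P a = 0" if "a \<in> A" for a
    using assms(2) that by (auto simp: even_poly_prod_orbit_poly_eq_0_iff)
  have "deriv (\<lambda>z. g z + (?P z)\<^sup>2 * even_poly p z) a = deriv g a" if "a \<in> A" for a
  proof (rule DERIV_imp_deriv)
    have "((\<lambda>z. (?P z)\<^sup>2 * even_poly p z) has_field_derivative 0) (at a)"
      using F_holomorphic[OF even_poly_in_F] P_zero[OF that]
      by (intro has_field_derivative_square_mult_zero holomorphic_on_imp_differentiable_at) auto
    moreover have "(g has_field_derivative deriv g a) (at a)"
      using F_holomorphic[OF g(1)]
      by (simp add: DERIV_deriv_iff_field_differentiable holomorphic_on_imp_differentiable_at)
    ultimately show "((\<lambda>z. g z + (?P z)\<^sup>2 * even_poly p z) has_field_derivative deriv g a) (at a)"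
      using DERIV_add by fastforce
  qed
  moreover have "(\<lambda>z. g z + even_poly ((\<Prod>a\<in>A. orbit_poly a)\<^sup>2 * p) z) \<in> F"
    using g(1) by (intro F_add even_poly_in_F)
  ultimately show ?thesis
    using g(2) P_zero unfolding F_fix_def sum by simp
qed

lemma exists_near_map_with_larger_admissible_preimage:
  assumes E: "admissible_E E" and A: "finite A" "A \<subseteq> E" and g: "g \<in> F_fix F f A"
    and fin: "finite (g -` B \<inter> ball 0 R)" and w: "w \<in> g -` B \<inter> ball 0 R" "w \<notin> E" and "t > 0"
  shows "\<exists>g'\<in>F_fix F f A. dF nrm g g' < t \<and> g -` B \<inter> ball 0 R \<inter> E \<subset> g' -` B \<inter> ball 0 R \<inter> E"
proof -
  define S where "S = g -` B \<inter> ball 0 R \<inter> E"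
  have S: "finite S" "S \<subseteq> E"
    using fin by (auto simp: S_def)
  \<comment> \<open>Multiples of N keep the values at S, and the values and derivatives at A.\<close>
  define P\<^sub>A where "P\<^sub>A = (\<Prod>a\<in>A. orbit_poly a)"
  define N where "N = P\<^sub>A\<^sup>2 * (\<Prod>s\<in>S. orbit_poly s)"
  have "g \<in> F"
    using g by (simp add: F_fix_def)
  have "even_poly N w \<noteq> 0"
    using even_poly_prod_orbit_poly_nonzero[OF E A w(2)] even_poly_prod_orbit_poly_nonzero[OF E S w(2)]
    by (simp add: N_def P\<^sub>A_def even_poly_mult power2_eq_square)
  obtain \<tau> where "\<tau> > 0" and \<tau>: "\<And>c\<^sub>1 c\<^sub>2. \<bar>c\<^sub>1\<bar> < \<tau> \<Longrightarrow> \<bar>c\<^sub>2\<bar> < \<tau> \<Longrightarrow>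
      dF nrm g (\<lambda>z. g z + even_poly (N * [:c\<^sub>1, c\<^sub>2:]) z) < t"
    using dF_add_even_poly_small[OF \<open>t > 0\<close>] by blast
  obtain e c\<^sub>1 c\<^sub>2 where e: "e \<in> E" "e \<in> ball 0 R" "even_poly N e \<noteq> 0" "\<bar>c\<^sub>1\<bar> < \<tau>" "\<bar>c\<^sub>2\<bar> < \<tau>"
      "of_real c\<^sub>1 + of_real c\<^sub>2 * e\<^sup>2 = (g w - g e) / even_poly N e"
    using exists_admissible_point_real_coeffs[OF E F_real_even_entire[OF \<open>g \<in> F\<close>]
        F_real_even_entire[OF even_poly_in_F] \<open>even_poly N w \<noteq> 0\<close> _ \<open>\<tau> > 0\<close>] w(1)
    by blast
  define g' where "g' = (\<lambda>z. g z + even_poly (N * [:c\<^sub>1, c\<^sub>2:]) z)"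
  have "g' \<in> F_fix F f A"
    using add_even_poly_in_F_fix[OF g A(1), of "(\<Prod>s\<in>S. orbit_poly s) * [:c\<^sub>1, c\<^sub>2:]"]
    by (simp only: g'_def N_def P\<^sub>A_def mult.assoc)
  have "even_poly N s = 0" if "s \<in> S" for s
    using S(1) that by (auto simp: N_def even_poly_mult even_poly_prod_orbit_poly_eq_0_iff)
  moreover have g'_eq: "g' z = g z + even_poly N z * (of_real c\<^sub>1 + of_real c\<^sub>2 * z\<^sup>2)" for z
    unfolding g'_def by (simp only: even_poly_mult even_poly_linear)
  ultimately have "g' s = g s" and "e \<noteq> s" if "s \<in> S" for s
    using that e(3) by auto
  moreover have "g' e = g w"
    using e(3,6) by (simp add: g'_eq)
  ultimately have "S \<subseteq> g' -` B \<inter> ball 0 R \<inter> E" and "e \<in> g' -` B \<inter> ball 0 R \<inter> E - S"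
    using e(1,2) w(1) by (auto simp: S_def)
  then have "S \<subset> g' -` B \<inter> ball 0 R \<inter> E"
    by blast
  then show ?thesis
    using \<open>g' \<in> F_fix F f A\<close> \<tau>[OF e(4,5)] unfolding S_def g'_def by blast
qed

end

theorem lemma3p4:
  fixes F :: "(complex \<Rightarrow> complex) set"
    and nrm :: "nat \<Rightarrow> (complex \<Rightarrow> complex) \<Rightarrow> real"
    and E A B :: "complex set" and f :: "complex \<Rightarrow> complex" and R \<epsilon> :: real
  assumes "frechet_setting F nrm"
    and "admissible_E E"
    and "f \<in> F"
    and "\<not> (\<exists>c::real. f = (\<lambda>z. of_real c))"
    and "finite A" and "A \<subseteq> E"
    and "finite B"
    and "R > 0"
    and "\<epsilon> > 0"
  shows "\<exists>g\<in>F_fix F f A. dF nrm f g < \<epsilon> \<and> (g -` B) \<inter> ball 0 R \<subseteq> E"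
proof -
  let ?Z = "\<lambda>g. g -` B \<inter> ball 0 R"
  obtain K \<eta> where "\<eta> > 0" and card_Z: "\<And>g. g \<in> F \<Longrightarrow> dF nrm f g < \<eta> \<Longrightarrow> finite (?Z g) \<and> card (?Z g) \<le> K"
    using dF_small_imp_card_preimage_le[OF assms(1,3,7)]
      real_even_entire_not_constant[OF F_real_even_entire[OF assms(1,3)] assms(4)] by metis
  have "\<exists>g\<in>F_fix F f A. dF nrm f g < min \<eta> \<epsilon> \<and> ?Z g \<subseteq> E"
  proof (rule exists_by_bounded_improvement[where c = "\<lambda>g. card (?Z g \<inter> E)" and K = K])
    show "f \<in> F_fix F f A" "dF nrm f f = 0" "min \<eta> \<epsilon> > 0"
      using assms(1,3,9) \<open>\<eta> > 0\<close> by (simp_all add: F_fix_def dF_self)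
    show "card (?Z g \<inter> E) \<le> K" if "g \<in> F_fix F f A" "dF nrm f g < min \<eta> \<epsilon>" for g
      using card_Z[of g] card_mono[OF _ Int_lower1, of "?Z g" E] that by (auto simp: F_fix_def)
  next
    fix g t
    assume g: "g \<in> F_fix F f A" "\<not> ?Z g \<subseteq> E" "t > 0" "dF nrm f g + t < min \<eta> \<epsilon>"
    then have "g \<in> F" and "finite (?Z g)"
      using card_Z[of g] by (auto simp: F_fix_def)
    then obtain g' where g': "g' \<in> F_fix F f A" "dF nrm g g' < t" "?Z g \<inter> E \<subset> ?Z g' \<inter> E"
      using exists_near_map_with_larger_admissible_preimage[OF assms(1,2,5,6) g(1)] g(2,3) by blast
    then have "dF nrm f g' < dF nrm f g + t"
      using dF_triangle[OF assms(1,3) \<open>g \<in> F\<close>, of g'] by (auto simp: F_fix_def)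
    then have "finite (?Z g')"
      using card_Z[of g'] g(4) g'(1) by (auto simp: F_fix_def)
    then show "\<exists>g'\<in>F_fix F f A. dF nrm f g' < dF nrm f g + t \<and> card (?Z g \<inter> E) < card (?Z g' \<inter> E)"
      using g' \<open>dF nrm f g' < dF nrm f g + t\<close> by (intro bexI[of _ g'] conjI psubset_card_mono) auto
  qed
  then show ?thesis
    by auto
qed

end
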